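(* Let $n$ be a positive integer, $0\le m\le\lfloor n/2\rfloor$ and $0\le k\le m$. Let $T_k$ be the Young tableau of shape $(n-k,k)$ whose first row contains $1,\dots,n-k$ and whose second row contains $n-k+1,\dots,n$, and let $R(T_k)\subseteq S_n$ be its row subgroup (permutations of $\{1,\dots,n\}$ preserving each row as a set). Let $\Omega=\{n-m+1,\dots,n\}$ and $\Omega_1=\{n-m+1,\dots,n-k\}$. Given subsets $V\subseteq\{1,\dots,k\}$ and $W\subseteq\Omega_1$, the number of $p\in R(T_k)$ such that $$W=\{\,i\in\Omega\mid p(i)\notin\Omega\cup V\,\}$$ equals $$\binom{n-m-\#V}{\#W}(\#W)!\,\binom{m-k+\#V}{m-k-\#W}(m-k-\#W)!\,k!\,(n-m)!\,.$$
   Context: $\#X$ denotes the cardinality of a finite set $X$. *)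

theory Defs
  imports "HOL-Combinatorics.Permutations"
begin

definition tableau_rows :: "nat \<Rightarrow> nat \<Rightarrow> nat set list" where
  "tableau_rows n k = [{1..n-k}, {n-k+1..n}]"

definition row_subgroup :: "nat \<Rightarrow> nat set list \<Rightarrow> (nat \<Rightarrow> nat) set" where
  "row_subgroup n rows = {p. p permutes {1..n} \<and> (\<forall>r\<in>set rows. p ` r = r)}"

end

theory Submission
  imports Defs "HOL-Library.FuncSet"
begin

(* A row permutation p of T_k stabilises the second row, which lies inside Omega, so only
   its action on the first row matters; there the condition on p says exactly that p maps W
   into {1..n-m} - V and Omega_1 - W into Omega_1 \<union> V, and is otherwise unconstrained.
   Counting such p as injections chosen block by block gives the falling factorials of
   n-m-#V and of m-k+#V for the two parts of Omega_1 (their targets are disjoint), (n-m)!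
   for {1..n-m} onto the first-row values still free, and k! for the second row. *)

lemma binomial_mult_fact_eq_prod: "(n choose k) * fact k = (\<Prod>i = 0..<k. n - i)"
proof (induction k)
  case 0
  then show ?case by simp
next
  case (Suc k)
  have "(n choose Suc k) * fact (Suc k) = (Suc k * (n choose Suc k)) * fact k"
    by (simp add: algebra_simps)
  also have "Suc k * (n choose Suc k) = (n - k) * (n choose k)"
    by (metis binomial_absorption binomial_absorb_comp)
  finally show ?case using Suc.IH by (simp add: prod.atLeastLessThan_Suc algebra_simps)
qed

definition inj_PiE :: "'a set \<Rightarrow> ('a \<Rightarrow> 'b set) \<Rightarrow> ('a \<Rightarrow> 'b) set" where
  "inj_PiE X C = {f \<in> PiE X C. inj_on f X}"

lemma finite_inj_PiE: "finite X \<Longrightarrow> (\<And>x. x \<in> X \<Longrightarrow> finite (C x)) \<Longrightarrow> finite (inj_PiE X C)"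
  unfolding inj_PiE_def by (simp add: finite_PiE)

lemma card_inj_PiE_const:
  assumes "finite X" "finite Y" "\<And>x. x \<in> X \<Longrightarrow> C x = Y"
  shows "card (inj_PiE X C) = (card Y choose card X) * fact (card X)"
proof -
  have "inj_PiE X C = {f \<in> X \<rightarrow>\<^sub>E Y. inj_on f X}"
    unfolding inj_PiE_def using assms(3) by (simp cong: PiE_cong)
  then show ?thesis
    using card_inj_on_subset_funcset[OF assms(1,2) subset_refl]
    by (simp add: binomial_mult_fact_eq_prod)
qed

lemma card_inj_PiE_Un:
  assumes "finite X" "finite Z" "X \<inter> Z = {}" "\<And>x. x \<in> X \<union> Z \<Longrightarrow> finite (C x)"
  shows "card (inj_PiE (X \<union> Z) C) = (\<Sum>g\<in>inj_PiE X C. card (inj_PiE Z (\<lambda>z. C z - g ` X)))"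
proof -
  let ?S = "SIGMA g:inj_PiE X C. inj_PiE Z (\<lambda>z. C z - g ` X)"
  let ?merge = "\<lambda>(g, h) x. if x \<in> X then g x else h x"
  have disjoint: "z \<notin> X" if "z \<in> Z" for z
    using assms(3) that by blast
  have "bij_betw (\<lambda>f. (restrict f X, restrict f Z)) (inj_PiE (X \<union> Z) C) ?S"
  proof (rule bij_betw_byWitness[where f' = ?merge])
    show "\<forall>f\<in>inj_PiE (X \<union> Z) C. ?merge (restrict f X, restrict f Z) = f"
      by (auto simp: inj_PiE_def PiE_def extensional_def)
    show "\<forall>a\<in>?S. (restrict (?merge a) X, restrict (?merge a) Z) = a"
      using assms(3) by (auto simp: inj_PiE_def PiE_def extensional_def fun_eq_iff)
    show "(\<lambda>f. (restrict f X, restrict f Z)) ` inj_PiE (X \<union> Z) C \<subseteq> ?S"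
      using assms(3) by (auto simp: inj_PiE_def inj_on_def) (metis UnI1 UnI2 disjoint_iff)
    show "?merge ` ?S \<subseteq> inj_PiE (X \<union> Z) C"
    proof clarify
      fix g h assume g: "g \<in> inj_PiE X C" and h: "h \<in> inj_PiE Z (\<lambda>z. C z - g ` X)"
      let ?f = "\<lambda>x. if x \<in> X then g x else h x"
      have "?f \<in> PiE (X \<union> Z) C"
        using g h by (auto simp: inj_PiE_def PiE_iff extensional_def)
      moreover have "inj_on ?f (X \<union> Z)"
      proof (subst inj_on_Un, intro conjI)
        show "inj_on ?f X"
          using g inj_on_cong[of X ?f g] by (simp add: inj_PiE_def)
        show "inj_on ?f Z"
          using h disjoint inj_on_cong[of Z ?f h] by (simp add: inj_PiE_def)
        show "?f ` (X - Z) \<inter> ?f ` (Z - X) = {}"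
          using h by (auto simp: inj_PiE_def PiE_iff image_iff) metis
      qed
      ultimately show "?f \<in> inj_PiE (X \<union> Z) C"
        by (simp add: inj_PiE_def)
    qed
  qed
  then have "card (inj_PiE (X \<union> Z) C) = card ?S"
    by (rule bij_betw_same_card)
  also have "\<dots> = (\<Sum>g\<in>inj_PiE X C. card (inj_PiE Z (\<lambda>z. C z - g ` X)))"
    using assms by (intro card_SigmaI finite_inj_PiE ballI) auto
  finally show ?thesis .
qed

lemma card_inj_PiE_Un_disjoint_images:
  assumes "finite X" "finite Z" "X \<inter> Z = {}" "\<And>x. x \<in> X \<union> Z \<Longrightarrow> finite (C x)"
    and "\<And>x z. x \<in> X \<Longrightarrow> z \<in> Z \<Longrightarrow> C x \<inter> C z = {}"
  shows "card (inj_PiE (X \<union> Z) C) = card (inj_PiE X C) * card (inj_PiE Z C)"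
proof -
  have "inj_PiE Z (\<lambda>z. C z - g ` X) = inj_PiE Z C" if "g \<in> inj_PiE X C" for g
  proof -
    have "C z - g ` X = C z" if "z \<in> Z" for z
      using \<open>g \<in> inj_PiE X C\<close> assms(5) that by (fastforce simp: inj_PiE_def)
    then show ?thesis
      by (simp add: inj_PiE_def cong: PiE_cong)
  qed
  then show ?thesis
    using card_inj_PiE_Un[OF assms(1-4)] by simp
qed

lemma card_inj_PiE_Un_const:
  assumes "finite X" "finite Z" "finite Y" "X \<inter> Z = {}"
    and "\<And>x. x \<in> X \<Longrightarrow> C x \<subseteq> Y" "\<And>z. z \<in> Z \<Longrightarrow> C z = Y"
  shows "card (inj_PiE (X \<union> Z) C)
    = card (inj_PiE X C) * ((card Y - card X) choose card Z) * fact (card Z)"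
proof -
  have fibre: "card (inj_PiE Z (\<lambda>z. C z - g ` X)) = ((card Y - card X) choose card Z) * fact (card Z)"
    if g: "g \<in> inj_PiE X C" for g
  proof -
    have "g ` X \<subseteq> Y" "card (g ` X) = card X"
      using g assms(5) by (auto simp: inj_PiE_def card_image)
    then have "card (Y - g ` X) = card Y - card X"
      using assms(3) by (metis card_Diff_subset finite_subset)
    then show ?thesis
      using card_inj_PiE_const[of Z "Y - g ` X"] assms(2,3,6) by simp
  qed
  have "finite (C x)" if "x \<in> X \<union> Z" for x
    using that assms(3,5,6) finite_subset by blast
  then have "card (inj_PiE (X \<union> Z) C) = (\<Sum>g\<in>inj_PiE X C. card (inj_PiE Z (\<lambda>z. C z - g ` X)))"
    by (rule card_inj_PiE_Un[OF assms(1,2,4)])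
  also have "\<dots> = (\<Sum>g\<in>inj_PiE X C. ((card Y - card X) choose card Z) * fact (card Z))"
    using fibre by (rule sum.cong[OF refl])
  finally show ?thesis
    by simp
qed

lemma card_permutes_constrained:
  assumes "finite S" "\<And>x. x \<in> S \<Longrightarrow> C x \<subseteq> S"
  shows "card {p. p permutes S \<and> (\<forall>x\<in>S. p x \<in> C x)} = card (inj_PiE S C)"
proof -
  let ?extend = "\<lambda>f x. if x \<in> S then f x else x"
  have "bij_betw (\<lambda>p. restrict p S) {p. p permutes S \<and> (\<forall>x\<in>S. p x \<in> C x)} (inj_PiE S C)"
  proof (rule bij_betw_byWitness[where f' = ?extend])
    show "\<forall>p\<in>{p. p permutes S \<and> (\<forall>x\<in>S. p x \<in> C x)}. ?extend (restrict p S) = p"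
      by (auto simp: fun_eq_iff permutes_not_in)
    show "\<forall>f\<in>inj_PiE S C. restrict (?extend f) S = f"
      by (auto simp: inj_PiE_def PiE_def extensional_def fun_eq_iff)
    show "(\<lambda>p. restrict p S) ` {p. p permutes S \<and> (\<forall>x\<in>S. p x \<in> C x)} \<subseteq> inj_PiE S C"
      by (auto simp: inj_PiE_def restrict_PiE_iff inj_on_def dest: permutes_inj injD)
    show "?extend ` inj_PiE S C \<subseteq> {p. p permutes S \<and> (\<forall>x\<in>S. p x \<in> C x)}"
    proof clarify
      fix f assume f: "f \<in> inj_PiE S C"
      then have "?extend f permutes S"
        using assms by (intro inj_imp_permutes) (auto simp: inj_PiE_def inj_on_def PiE_iff)
      with f show "?extend f permutes S \<and> (\<forall>x\<in>S. ?extend f x \<in> C x)"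
        by (auto simp: inj_PiE_def)
    qed
  qed
  then show ?thesis
    by (rule bij_betw_same_card)
qed

lemma inj_image_eq_iff_maps_into:
  assumes "inj p" "finite R"
  shows "p ` R = R \<longleftrightarrow> (\<forall>x\<in>R. p x \<in> R)"
proof
  assume "\<forall>x\<in>R. p x \<in> R"
  then show "p ` R = R"
    using endo_inj_surj[OF assms(2)] inj_on_subset[OF assms(1)] by blast
qed auto

definition tableau_row_of :: "nat \<Rightarrow> nat \<Rightarrow> nat \<Rightarrow> nat set" where
  "tableau_row_of n k x = (if x \<le> n - k then {1..n-k} else {n-k+1..n})"

lemma tableau_row_of_subset: "tableau_row_of n k x \<subseteq> {1..n}"
  by (auto simp: tableau_row_of_def)

lemma row_subgroup_tableau_rows_iff:
  "p \<in> row_subgroup n (tableau_rows n k)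
    \<longleftrightarrow> p permutes {1..n} \<and> (\<forall>x\<in>{1..n}. p x \<in> tableau_row_of n k x)"
proof -
  have "p ` R = R \<longleftrightarrow> (\<forall>x\<in>R. p x \<in> R)" if "p permutes {1..n}" "finite R" for R
    using inj_image_eq_iff_maps_into[OF permutes_inj[OF that(1)] that(2)] .
  moreover have "p \<in> row_subgroup n (tableau_rows n k) \<longleftrightarrow> p permutes {1..n}
      \<and> p ` {1..n-k} = {1..n-k} \<and> p ` {n-k+1..n} = {n-k+1..n}"
    by (simp add: row_subgroup_def tableau_rows_def)
  ultimately have "p \<in> row_subgroup n (tableau_rows n k) \<longleftrightarrow> p permutes {1..n}
      \<and> (\<forall>x\<in>{1..n-k}. p x \<in> {1..n-k}) \<and> (\<forall>x\<in>{n-k+1..n}. p x \<in> {n-k+1..n})"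
    by (meson finite_atLeastAtMost)
  moreover have "(\<forall>x\<in>{1..n}. p x \<in> tableau_row_of n k x)
      \<longleftrightarrow> (\<forall>x\<in>{1..n-k}. p x \<in> {1..n-k}) \<and> (\<forall>x\<in>{n-k+1..n}. p x \<in> {n-k+1..n})"
    (is "?by_entry \<longleftrightarrow> ?by_row")
  proof
    assume by_entry: ?by_entry
    show ?by_row
    proof safe
      fix x assume "x \<in> {1..n-k}"
      then show "p x \<in> {1..n-k}"
        using by_entry[rule_format, of x] by (auto simp: tableau_row_of_def)
    next
      fix x assume "x \<in> {n-k+1..n}"
      then show "p x \<in> {n-k+1..n}"
        using by_entry[rule_format, of x] by (auto simp: tableau_row_of_def)
    qed
  next
    assume ?by_row
    then show ?by_entry
      unfolding tableau_row_of_def by (metis atLeastAtMost_iff not_less_eq_eq Suc_eq_plus1)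
  qed
  ultimately show ?thesis
    by blast
qed

definition allowed_images :: "nat \<Rightarrow> nat \<Rightarrow> nat \<Rightarrow> nat set \<Rightarrow> nat set \<Rightarrow> nat \<Rightarrow> nat set" where
  "allowed_images n m k V W x =
    (if x \<in> W then {1..n-m} - V
     else if x \<in> {n-m+1..n-k} then {n-m+1..n-k} \<union> V
     else tableau_row_of n k x)"

lemma allowed_images_subset_tableau_row:
  assumes "k \<le> m" "m \<le> n - m" "V \<subseteq> {1..k}" "W \<subseteq> {n-m+1..n-k}"
  shows "allowed_images n m k V W x \<subseteq> tableau_row_of n k x"
  using assms by (auto simp: allowed_images_def tableau_row_of_def)

lemma mem_allowed_images_iff:
  assumes "k \<le> m" "m \<le> n - m" "V \<subseteq> {1..k}" "W \<subseteq> {n-m+1..n-k}"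
    and "y \<in> tableau_row_of n k x"
  shows "y \<in> allowed_images n m k V W x
    \<longleftrightarrow> (x \<in> W \<longleftrightarrow> x \<in> {n-m+1..n} \<and> y \<notin> {n-m+1..n} \<union> V)"
  using assms by (auto simp: allowed_images_def tableau_row_of_def)

lemma row_subgroup_escape_set_eq:
  assumes "k \<le> m" "m \<le> n - m" "V \<subseteq> {1..k}" "W \<subseteq> {n-m+1..n-k}"
  shows "{p \<in> row_subgroup n (tableau_rows n k). W = {i \<in> {n-m+1..n}. p i \<notin> {n-m+1..n} \<union> V}}
    = {p. p permutes {1..n} \<and> (\<forall>x\<in>{1..n}. p x \<in> allowed_images n m k V W x)}"
proof -
  have "W = {i \<in> {n-m+1..n}. p i \<notin> {n-m+1..n} \<union> V}
      \<longleftrightarrow> (\<forall>x\<in>{1..n}. p x \<in> allowed_images n m k V W x)"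
    if rows: "\<forall>x\<in>{1..n}. p x \<in> tableau_row_of n k x" for p
  proof -
    have "W = {i \<in> {n-m+1..n}. p i \<notin> {n-m+1..n} \<union> V}
        \<longleftrightarrow> (\<forall>x\<in>{1..n}. x \<in> W \<longleftrightarrow> x \<in> {n-m+1..n} \<and> p x \<notin> {n-m+1..n} \<union> V)"
    proof -
      have "W \<subseteq> {1..n}"
        using assms(4) by (rule order_trans) auto
      moreover have "{n-m+1..n} \<subseteq> {1..n}"
        by auto
      ultimately show ?thesis
        unfolding set_eq_iff mem_Collect_eq by blast
    qed
    also have "\<dots> \<longleftrightarrow> (\<forall>x\<in>{1..n}. p x \<in> allowed_images n m k V W x)"
      by (rule ball_cong[OF refl]) (use rows mem_allowed_images_iff[OF assms] in simp)
    finally show ?thesis .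
  qed
  moreover have "(\<forall>x\<in>{1..n}. p x \<in> allowed_images n m k V W x)
      \<Longrightarrow> (\<forall>x\<in>{1..n}. p x \<in> tableau_row_of n k x)" for p
    using allowed_images_subset_tableau_row[OF assms] by blast
  ultimately show ?thesis
    unfolding row_subgroup_tableau_rows_iff by blast
qed

lemma card_inj_PiE_allowed_images_Omega1:
  assumes "k \<le> m" "m \<le> n - m" "V \<subseteq> {1..k}" "W \<subseteq> {n-m+1..n-k}"
  shows "card (inj_PiE {n-m+1..n-k} (allowed_images n m k V W))
    = ((n - m - card V) choose card W) * fact (card W)
      * ((m - k + card V) choose (m - k - card W)) * fact (m - k - card W)"
proof -
  let ?C = "allowed_images n m k V W" and ?\<Omega>\<^sub>1 = "{n-m+1..n-k}"
  have "finite V" "finite W"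
    using assms(3,4) finite_subset by blast+
  have "?\<Omega>\<^sub>1 = W \<union> (?\<Omega>\<^sub>1 - W)"
    using assms(4) by blast
  moreover have "card (inj_PiE (W \<union> (?\<Omega>\<^sub>1 - W)) ?C)
      = card (inj_PiE W ?C) * card (inj_PiE (?\<Omega>\<^sub>1 - W) ?C)"
    by (rule card_inj_PiE_Un_disjoint_images)
      (use assms \<open>finite V\<close> \<open>finite W\<close> in \<open>auto simp: allowed_images_def\<close>)
  moreover have "card (inj_PiE W ?C) = ((n - m - card V) choose card W) * fact (card W)"
  proof -
    have "V \<subseteq> {1..n-m}"
      using assms(1-3) by auto
    then have "card ({1..n-m} - V) = n - m - card V"
      using \<open>finite V\<close> by (simp add: card_Diff_subset)
    then show ?thesis
      using card_inj_PiE_const[of W "{1..n-m} - V" ?C] \<open>finite W\<close>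
      by (simp add: allowed_images_def)
  qed
  moreover have "card (inj_PiE (?\<Omega>\<^sub>1 - W) ?C)
      = ((m - k + card V) choose (m - k - card W)) * fact (m - k - card W)"
  proof -
    have "?\<Omega>\<^sub>1 \<inter> V = {}"
      using assms(1-3) by auto
    then have "card (?\<Omega>\<^sub>1 \<union> V) = m - k + card V"
      using assms(1,2) \<open>finite V\<close> by (simp add: card_Un_disjoint)
    moreover have "card (?\<Omega>\<^sub>1 - W) = m - k - card W"
      using assms(1,2,4) \<open>finite W\<close> by (simp add: card_Diff_subset)
    ultimately show ?thesis
      using card_inj_PiE_const[of "?\<Omega>\<^sub>1 - W" "?\<Omega>\<^sub>1 \<union> V" ?C] \<open>finite V\<close>
      by (simp add: allowed_images_def)
  qed
  ultimately show ?thesis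
    by (simp add: mult.assoc)
qed

lemma card_inj_PiE_allowed_images:
  assumes "k \<le> m" "m \<le> n - m" "V \<subseteq> {1..k}" "W \<subseteq> {n-m+1..n-k}"
  shows "card (inj_PiE {1..n} (allowed_images n m k V W))
    = ((n - m - card V) choose card W) * fact (card W)
      * ((m - k + card V) choose (m - k - card W)) * fact (m - k - card W)
      * fact k * fact (n - m)"
proof -
  let ?C = "allowed_images n m k V W" and ?\<Omega>\<^sub>1 = "{n-m+1..n-k}"
  have finite_C: "finite (?C x)" for x
    using allowed_images_subset_tableau_row[OF assms] tableau_row_of_subset
    by (rule finite_subset[OF order_trans]) simp
  have "{1..n} = (?\<Omega>\<^sub>1 \<union> {1..n-m}) \<union> {n-k+1..n}"
    using assms(1,2) by auto
  moreover have "card (inj_PiE ((?\<Omega>\<^sub>1 \<union> {1..n-m}) \<union> {n-k+1..n}) ?C)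
      = card (inj_PiE (?\<Omega>\<^sub>1 \<union> {1..n-m}) ?C) * card (inj_PiE {n-k+1..n} ?C)"
    by (rule card_inj_PiE_Un_disjoint_images)
      (use finite_C assms in \<open>auto simp: allowed_images_def tableau_row_of_def\<close>)
  moreover have "card (inj_PiE (?\<Omega>\<^sub>1 \<union> {1..n-m}) ?C)
      = card (inj_PiE ?\<Omega>\<^sub>1 ?C) * ((n - k - (m - k)) choose (n - m)) * fact (n - m)"
    using assms by (subst card_inj_PiE_Un_const[where Y = "{1..n-k}"])
      (auto simp: allowed_images_def tableau_row_of_def)
  moreover have "card (inj_PiE {n-k+1..n} ?C) = fact k"
  proof -
    have "?C x = {n-k+1..n}" if "x \<in> {n-k+1..n}" for x
      using that assms(4) by (auto simp: allowed_images_def tableau_row_of_def)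
    then show ?thesis
      using card_inj_PiE_const[of "{n-k+1..n}" "{n-k+1..n}" ?C] assms(1,2) by simp
  qed
  ultimately show ?thesis
    using assms(1) card_inj_PiE_allowed_images_Omega1[OF assms]
    by (simp add: mult.commute mult.left_commute)
qed

theorem lemma4:
  fixes n m k :: nat and V W :: "nat set"
  assumes "0 < n" and "m \<le> n div 2" and "k \<le> m"
    and "V \<subseteq> {1..k}" and "W \<subseteq> {n-m+1..n-k}"
  shows "card {p \<in> row_subgroup n (tableau_rows n k).
            W = {i \<in> {n-m+1..n}. p i \<notin> {n-m+1..n} \<union> V}}
         = ((n - m - card V) choose card W) * fact (card W)
           * ((m - k + card V) choose (m - k - card W)) * fact (m - k - card W)
           * fact k * fact (n - m)"
proof -
  have "m \<le> n - m"
    using assms(2) by linarith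
  note hyps = assms(3) this assms(4,5)
  have "allowed_images n m k V W x \<subseteq> {1..n}" for x
    using allowed_images_subset_tableau_row[OF hyps] tableau_row_of_subset by (rule order_trans)
  then have "card {p. p permutes {1..n} \<and> (\<forall>x\<in>{1..n}. p x \<in> allowed_images n m k V W x)}
      = card (inj_PiE {1..n} (allowed_images n m k V W))"
    by (intro card_permutes_constrained) auto
  then show ?thesis
    unfolding row_subgroup_escape_set_eq[OF hyps] card_inj_PiE_allowed_images[OF hyps] .
qed

end
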